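(* Let $\mathcal{X}$ be a finite set of locations with metric $d$, let $\pi$ be a prior distribution on $\mathcal{X}$ with $\pi(x)>0$ for all $x\in\mathcal{X}$, let $\{\Phi_k\}$ be a partition of $\mathcal{X}$ into nonempty disjoint sets, let $\epsilon_k\ge 0$ for each $k$, and let $E_m\ge 0$. Let $f(\cdot\mid\cdot)$ be an obfuscation mechanism that satisfies $\epsilon_k$-differential privacy on each $\Phi_k$, i.e. $f(x'\mid x)\le e^{\epsilon_k} f(x'\mid y)$ for all $x,y\in\Phi_k$ and all $x'\in\mathcal{X}$. Suppose that for every $k$, $$E'(\Phi_k)\ \ge\ e^{\epsilon_k}E_m .$$ Then for every pseudo-location $x'\in\mathcal{X}$ with $\Pr(x')>0$, the conditional expected inference error of the optimal inference attack satisfies $ExpEr(x')\ge E_m$.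
   Context: An obfuscation mechanism is a family of probability distributions $f(\cdot\mid x)$ on $\mathcal{X}$, one for each true location $x\in\mathcal{X}$; $f(x'\mid x)$ is the probability of reporting pseudo-location $x'$ when the true location is $x$. The adversary knows $\pi$ and $f$. Define $\Pr(x')=\sum_{x\in\mathcal{X}}\pi(x)f(x'\mid x)$ and, when $\Pr(x')>0$, the posterior $\Pr(x\mid x')=\pi(x)f(x'\mid x)/\Pr(x')$. The conditional expected inference error (of the optimal inference attack) is $$ExpEr(x')=\min_{\hat{x}\in\mathcal{X}}\sum_{x\in\mathcal{X}}\Pr(x\mid x')\,d(\hat{x},x).$$ For a nonempty $\Phi\subseteq\mathcal{X}$, define $$E'(\Phi)=\min_{\hat{x}\in\mathcal{X}}\sum_{x\in\Phi}\frac{\pi(x)}{\sum_{y\in\Phi}\pi(y)}\,d(\hat{x},x)$$ (note the minimum ranges over all of $\mathcal{X}$, not just $\Phi$). *)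

theory Defs
  imports "HOL-Analysis.Analysis"
begin

definition is_metric_on :: "'a set \<Rightarrow> ('a \<Rightarrow> 'a \<Rightarrow> real) \<Rightarrow> bool" where
  "is_metric_on X d \<longleftrightarrow>
     (\<forall>x\<in>X. \<forall>y\<in>X. d x y \<ge> 0) \<and>
     (\<forall>x\<in>X. \<forall>y\<in>X. d x y = 0 \<longleftrightarrow> x = y) \<and>
     (\<forall>x\<in>X. \<forall>y\<in>X. d x y = d y x) \<and>
     (\<forall>x\<in>X. \<forall>y\<in>X. \<forall>z\<in>X. d x z \<le> d x y + d y z)"

definition is_distribution_on :: "'a set \<Rightarrow> ('a \<Rightarrow> real) \<Rightarrow> bool" where
  "is_distribution_on X p \<longleftrightarrow> (\<forall>x\<in>X. p x \<ge> 0) \<and> (\<Sum>x\<in>X. p x) = 1"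

text \<open>Obfuscation mechanism: f x' x is the probability of reporting x' given true location x.\<close>
definition is_mechanism :: "'a set \<Rightarrow> ('a \<Rightarrow> 'a \<Rightarrow> real) \<Rightarrow> bool" where
  "is_mechanism X f \<longleftrightarrow> (\<forall>x\<in>X. is_distribution_on X (\<lambda>x'. f x' x))"

definition is_partition_of :: "'a set \<Rightarrow> 'a set set \<Rightarrow> bool" where
  "is_partition_of X P \<longleftrightarrow> \<Union>P = X \<and> {} \<notin> P \<and>
     (\<forall>A\<in>P. \<forall>B\<in>P. A \<noteq> B \<longrightarrow> A \<inter> B = {})"

definition Pr_out :: "'a set \<Rightarrow> ('a \<Rightarrow> real) \<Rightarrow> ('a \<Rightarrow> 'a \<Rightarrow> real) \<Rightarrow> 'a \<Rightarrow> real" where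
  "Pr_out X \<pi> f x' = (\<Sum>x\<in>X. \<pi> x * f x' x)"

definition posterior :: "'a set \<Rightarrow> ('a \<Rightarrow> real) \<Rightarrow> ('a \<Rightarrow> 'a \<Rightarrow> real) \<Rightarrow> 'a \<Rightarrow> 'a \<Rightarrow> real" where
  "posterior X \<pi> f x x' = \<pi> x * f x' x / Pr_out X \<pi> f x'"

definition ExpEr :: "'a set \<Rightarrow> ('a \<Rightarrow> 'a \<Rightarrow> real) \<Rightarrow> ('a \<Rightarrow> real) \<Rightarrow> ('a \<Rightarrow> 'a \<Rightarrow> real) \<Rightarrow> 'a \<Rightarrow> real" where
  "ExpEr X d \<pi> f x' = Min ((\<lambda>xh. \<Sum>x\<in>X. posterior X \<pi> f x x' * d xh x) ` X)"

definition E' :: "'a set \<Rightarrow> ('a \<Rightarrow> 'a \<Rightarrow> real) \<Rightarrow> ('a \<Rightarrow> real) \<Rightarrow> 'a set \<Rightarrow> real" where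
  "E' X d \<pi> \<Phi> = Min ((\<lambda>xh. \<Sum>x\<in>\<Phi>. \<pi> x / (\<Sum>y\<in>\<Phi>. \<pi> y) * d xh x) ` X)"

end

theory Submission
  imports Defs
begin

text \<open>
  Fix the report x' and a guess xh. Within a block \<Phi> the likelihoods f x' x differ by at most the
  factor e = exp (\<epsilon> \<Phi>), so up to that factor the posterior restricted to \<Phi> is the prior restricted
  to \<Phi>, whose expected distance to xh is at least E'(\<Phi>) \<ge> e Em. Hence each block contributes at
  least Em times its posterior mass to the expected error of xh, and summing over the blocks
  gives ExpEr(x') \<ge> Em.
\<close>

text \<open>The core inequality, with g = f x' as likelihood, w = \<pi> as prior and D = d xh as distance.\<close>
lemma weighted_sum_lower_bound_bounded_ratio:
  fixes w g D :: "'a \<Rightarrow> real" and e Em :: real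
  assumes "finite \<Phi>" "\<Phi> \<noteq> {}"
    and w: "\<forall>x\<in>\<Phi>. w x \<ge> 0" and g: "\<forall>x\<in>\<Phi>. g x \<ge> 0" and D: "\<forall>x\<in>\<Phi>. D x \<ge> 0"
    and Em: "Em \<ge> 0"
    and ratio: "\<forall>x\<in>\<Phi>. \<forall>y\<in>\<Phi>. g x \<le> e * g y"
    and avg: "e * Em * (\<Sum>x\<in>\<Phi>. w x) \<le> (\<Sum>x\<in>\<Phi>. w x * D x)"
  shows "Em * (\<Sum>x\<in>\<Phi>. w x * g x) \<le> (\<Sum>x\<in>\<Phi>. w x * g x * D x)"
proof -
  define m where "m = Min (g ` \<Phi>)"
  have "m \<in> g ` \<Phi>" unfolding m_def using assms(1,2) by simp
  then obtain y0 where y0: "y0 \<in> \<Phi>" "g y0 = m" by auto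
  have m_le: "m \<le> g x" if "x \<in> \<Phi>" for x
    unfolding m_def using assms(1) that by simp
  have "m \<ge> 0" using y0 g by auto
  have "Em * (\<Sum>x\<in>\<Phi>. w x * g x) \<le> Em * (\<Sum>x\<in>\<Phi>. w x * (e * m))"
    using ratio y0 w Em by (intro mult_left_mono sum_mono mult_left_mono) auto
  also have "\<dots> = m * (e * Em * (\<Sum>x\<in>\<Phi>. w x))"
    by (simp add: sum_distrib_left sum_distrib_right algebra_simps)
  also have "\<dots> \<le> m * (\<Sum>x\<in>\<Phi>. w x * D x)"
    using avg \<open>m \<ge> 0\<close> by (rule mult_left_mono)
  also have "\<dots> = (\<Sum>x\<in>\<Phi>. m * (w x * D x))"
    by (simp add: sum_distrib_left)
  also have "\<dots> \<le> (\<Sum>x\<in>\<Phi>. w x * g x * D x)"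
  proof (rule sum_mono)
    fix x assume "x \<in> \<Phi>"
    then have "m * (w x * D x) \<le> g x * (w x * D x)"
      using m_le w D by (intro mult_right_mono) auto
    then show "m * (w x * D x) \<le> w x * g x * D x" by (simp add: algebra_simps)
  qed
  finally show ?thesis .
qed

lemma E'_mult_prior_mass_le:
  assumes "finite X" "xh \<in> X" "(\<Sum>y\<in>\<Phi>. \<pi> y) > 0"
  shows "E' X d \<pi> \<Phi> * (\<Sum>y\<in>\<Phi>. \<pi> y) \<le> (\<Sum>x\<in>\<Phi>. \<pi> x * d xh x)"
proof -
  have "E' X d \<pi> \<Phi> \<le> (\<Sum>x\<in>\<Phi>. \<pi> x / (\<Sum>y\<in>\<Phi>. \<pi> y) * d xh x)"
    unfolding E'_def using assms(1,2) by (intro Min_le) auto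
  also have "\<dots> = (\<Sum>x\<in>\<Phi>. \<pi> x * d xh x) / (\<Sum>y\<in>\<Phi>. \<pi> y)"
    by (simp add: sum_divide_distrib)
  finally show ?thesis using assms(3) by (simp add: pos_le_divide_eq)
qed

lemma sum_over_partition:
  assumes "finite X" "is_partition_of X P"
  shows "sum g X = (\<Sum>A\<in>P. sum g A)"
proof -
  have "\<Union>P = X" and disj: "\<forall>A\<in>P. \<forall>B\<in>P. A \<noteq> B \<longrightarrow> A \<inter> B = {}"
    using assms(2) unfolding is_partition_of_def by auto
  then have "\<forall>A\<in>P. finite A" using assms(1) by (auto intro: finite_subset)
  then show ?thesis using sum.Union_disjoint[OF _ disj] \<open>\<Union>P = X\<close> by simp
qed

lemma ExpEr_lower_bound:
  assumes "finite X" "X \<noteq> {}" "Pr_out X \<pi> f x' > 0"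
    and bound: "\<And>xh. xh \<in> X \<Longrightarrow> Em * Pr_out X \<pi> f x' \<le> (\<Sum>x\<in>X. \<pi> x * f x' x * d xh x)"
  shows "Em \<le> ExpEr X d \<pi> f x'"
  unfolding ExpEr_def
proof (rule Min.boundedI)
  fix v assume "v \<in> (\<lambda>xh. \<Sum>x\<in>X. posterior X \<pi> f x x' * d xh x) ` X"
  then obtain xh where "xh \<in> X" and v: "v = (\<Sum>x\<in>X. posterior X \<pi> f x x' * d xh x)"
    by blast
  have "v = (\<Sum>x\<in>X. \<pi> x * f x' x * d xh x) / Pr_out X \<pi> f x'"
    unfolding v posterior_def by (simp add: sum_divide_distrib)
  then show "Em \<le> v" using bound[OF \<open>xh \<in> X\<close>] assms(3) by (simp add: pos_le_divide_eq)
qed (use assms(1,2) in auto)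

theorem theorem4:
  fixes X :: "'a set" and d :: "'a \<Rightarrow> 'a \<Rightarrow> real" and \<pi> :: "'a \<Rightarrow> real"
    and P :: "'a set set" and \<epsilon> :: "'a set \<Rightarrow> real" and Em :: real
    and f :: "'a \<Rightarrow> 'a \<Rightarrow> real"
  assumes "finite X" "X \<noteq> {}"
    and "is_metric_on X d"
    and "is_distribution_on X \<pi>" "\<forall>x\<in>X. \<pi> x > 0"
    and "is_partition_of X P"
    and "\<forall>\<Phi>\<in>P. \<epsilon> \<Phi> \<ge> 0"
    and "Em \<ge> 0"
    and "is_mechanism X f"
    and "\<forall>\<Phi>\<in>P. \<forall>x\<in>\<Phi>. \<forall>y\<in>\<Phi>. \<forall>x'\<in>X. f x' x \<le> exp (\<epsilon> \<Phi>) * f x' y"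
    and "\<forall>\<Phi>\<in>P. E' X d \<pi> \<Phi> \<ge> exp (\<epsilon> \<Phi>) * Em"
    and "x' \<in> X" "Pr_out X \<pi> f x' > 0"
  shows "ExpEr X d \<pi> f x' \<ge> Em"
proof (rule ExpEr_lower_bound[OF assms(1,2,13)])
  fix xh assume "xh \<in> X"
  have blocks: "\<Phi> \<subseteq> X" "\<Phi> \<noteq> {}" if "\<Phi> \<in> P" for \<Phi>
    using assms(6) that unfolding is_partition_of_def by auto
  have block_bound: "Em * (\<Sum>x\<in>\<Phi>. \<pi> x * f x' x) \<le> (\<Sum>x\<in>\<Phi>. \<pi> x * f x' x * d xh x)"
    if "\<Phi> \<in> P" for \<Phi>
  proof (rule weighted_sum_lower_bound_bounded_ratio[where e = "exp (\<epsilon> \<Phi>)"])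
    have mass: "(\<Sum>y\<in>\<Phi>. \<pi> y) > 0"
      using blocks[OF that] assms(1,5) by (intro sum_pos) (auto intro: finite_subset)
    have "exp (\<epsilon> \<Phi>) * Em * (\<Sum>y\<in>\<Phi>. \<pi> y) \<le> E' X d \<pi> \<Phi> * (\<Sum>y\<in>\<Phi>. \<pi> y)"
      using assms(11) that mass by (intro mult_right_mono) auto
    then show "exp (\<epsilon> \<Phi>) * Em * (\<Sum>y\<in>\<Phi>. \<pi> y) \<le> (\<Sum>x\<in>\<Phi>. \<pi> x * d xh x)"
      using E'_mult_prior_mass_le[OF assms(1) \<open>xh \<in> X\<close> mass, of d] by linarith
  qed (use blocks[OF that] assms(1,3,5,8,9,10,12) \<open>xh \<in> X\<close> that in
       \<open>auto simp: is_metric_on_def is_mechanism_def is_distribution_on_def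
             intro: finite_subset less_imp_le\<close>)
  have "Em * Pr_out X \<pi> f x' = (\<Sum>\<Phi>\<in>P. Em * (\<Sum>x\<in>\<Phi>. \<pi> x * f x' x))"
    unfolding Pr_out_def sum_over_partition[OF assms(1,6)] by (simp add: sum_distrib_left)
  also have "\<dots> \<le> (\<Sum>\<Phi>\<in>P. \<Sum>x\<in>\<Phi>. \<pi> x * f x' x * d xh x)"
    using block_bound by (rule sum_mono)
  also have "\<dots> = (\<Sum>x\<in>X. \<pi> x * f x' x * d xh x)"
    by (rule sum_over_partition[OF assms(1,6), symmetric])
  finally show "Em * Pr_out X \<pi> f x' \<le> (\<Sum>x\<in>X. \<pi> x * f x' x * d xh x)" .
qed

end
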